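(* Let $A\in(0,1)$, $M<0$, $Q>0$, $S>0$ and consider the planar system $$\frac{du}{d\tau}=u^2\big((u+A)(1-u)(u-M)-Qv\big),\qquad \frac{dv}{d\tau}=S(u+A)(u-v)v$$ on $\{u\ge 0,\ v\ge 0\}$. Put $T=1-A+M$, $L=A(M+1)-Q-M$ and $g(u)=u^3-Tu^2-Lu+AM$. Let $u^*\in(0,1)$ be a root of $g$, and set $\Delta=(u^*-T)^2-4\big(u^*(u^*-T)-L\big)$ and $u^*_\pm=\tfrac12\big(T-u^*\pm\sqrt{\Delta}\big)$ whenever $\Delta\ge 0$, with the root $u^*$ chosen so that $u^*\le u^*_-\le u^*_+$. Assume $T>0$, $L<0$ and $\Delta=0$, so that the equilibria $P_2=(u^*_-,u^*_-)$ and $P_3=(u^*_+,u^*_+)$ coincide. Assume moreover that $$S=\frac{Q\,(T-u^* )}{1+A+M-u^*}.$$ Then the equilibrium $P_2=P_3=(u^*_-,u^*_-)$ is a cusp point.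
   Context: The positive equilibria of the system are the points $(u,u)$ with $u>0$ a root of $g$; since $g(0)=AM<0<Q=g(1)$, $g$ always has a root in $(0,1)$. For such a root $u^*$, $\Delta$ is the discriminant and $u^*_\pm$ are the roots of the quadratic $g(u)/(u-u^* )=u^2+(u^*-T)u+u^*(u^*-T)-L$. A cusp point (in the sense of Andronov et al.) is an equilibrium whose Jacobian matrix is nonzero and nilpotent, i.e. has a double zero eigenvalue with a single Jordan block; it is a codimension-two (Bogdanov--Takens type) singularity. *)

theory Defs
  imports "HOL-Analysis.Analysis"
begin

definition vfield :: "real \<Rightarrow> real \<Rightarrow> real \<Rightarrow> real \<Rightarrow> real \<times> real \<Rightarrow> real \<times> real" where
  "vfield A M Q S = (\<lambda>(u, v).
     (u\<^sup>2 * ((u + A) * (1 - u) * (u - M) - Q * v),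
      S * (u + A) * (u - v) * v))"

definition nilpotent_map :: "('a::real_vector \<Rightarrow> 'a) \<Rightarrow> bool" where
  "nilpotent_map J \<longleftrightarrow> (\<exists>n. (J ^^ n) = (\<lambda>_. 0))"

text \<open>Cusp point (Andronov et al.): an equilibrium whose Jacobian (the Frechet
  derivative of the field at the point) is nonzero and nilpotent.\<close>
definition cusp_point :: "('a::real_normed_vector \<Rightarrow> 'a) \<Rightarrow> 'a \<Rightarrow> bool" where
  "cusp_point F p \<longleftrightarrow> F p = 0 \<and>
     (\<exists>J. (F has_derivative J) (at p) \<and> J \<noteq> (\<lambda>_. 0) \<and> nilpotent_map J)"

end

theory Submission
  imports Defs
begin

text \<open>Since \<open>\<Delta> = 0\<close>, the point \<open>w = u\<^sup>*\<^sub>-\<close> is a double root of \<open>g\<close>. As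
  \<open>(u + A)(1 - u)(u - M) - Q u = - g u\<close>, the equilibrium condition at \<open>(w, w)\<close> is
  \<open>g w = 0\<close>, and \<open>g' w = 0\<close> makes the first row of the Jacobian equal to
  \<open>Q w\<^sup>2 (1, -1)\<close>. The second row is \<open>S (w + A) w (1, -1)\<close>, and the hypothesis on
  \<open>S\<close> is exactly \<open>S (w + A) = Q w\<close>. So the Jacobian is \<open>Q w\<^sup>2\<close> times the
  nonzero nilpotent matrix with rows \<open>(1, -1)\<close>, \<open>(1, -1)\<close>.\<close>

lemma nilpotent_map_trace_det_zero:
  fixes a b c d :: real
  assumes "a + d = 0" "a * d - b * c = 0"
  shows "nilpotent_map (\<lambda>(x, y). (a * x + b * y, c * x + d * y))"
proof -
  have "a * (a * x + b * y) + b * (c * x + d * y) = 0"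
    and "c * (a * x + b * y) + d * (c * x + d * y) = 0" for x y
    using assms by algebra+
  then have "(\<lambda>(x, y). (a * x + b * y, c * x + d * y)) ^^ 2 = (\<lambda>_. 0)"
    by (auto simp: numeral_2_eq_2 zero_prod_def)
  then show ?thesis
    unfolding nilpotent_map_def by blast
qed

lemma cubic_double_root_of_zero_discriminant:
  fixes T L c us :: real
  defines "w \<equiv> (T - us) / 2"
  assumes "us ^ 3 - T * us\<^sup>2 - L * us + c = 0"
    and "(us - T)\<^sup>2 - 4 * (us * (us - T) - L) = 0"
  shows "w ^ 3 - T * w\<^sup>2 - L * w + c = 0"
    and "3 * w\<^sup>2 - 2 * T * w - L = 0"
proof -
  have L: "L = (3 * us\<^sup>2 - T\<^sup>2 - 2 * T * us) / 4"
    using assms(3) by (simp add: power2_eq_square algebra_simps)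
  have "w ^ 3 - T * w\<^sup>2 - L * w + c = (w - us) * (w\<^sup>2 + (us - T) * w + us * (us - T) - L)"
    using assms(2) by (simp add: power2_eq_square power3_eq_cube algebra_simps)
  also have "w\<^sup>2 + (us - T) * w + us * (us - T) - L = 0"
    unfolding L w_def by (simp add: power2_eq_square field_simps)
  finally show "w ^ 3 - T * w\<^sup>2 - L * w + c = 0"
    by simp
  show "3 * w\<^sup>2 - 2 * T * w - L = 0"
    unfolding L w_def by (simp add: power2_eq_square field_simps)
qed

lemma vfield_has_derivative:
  fixes A M Q S u v :: real
  defines "p \<equiv> (u + A) * (1 - u) * (u - M)"
    and "p' \<equiv> (1 - u) * (u - M) - (u + A) * (u - M) + (u + A) * (1 - u)"
  shows "(vfield A M Q S has_derivative
           (\<lambda>(x, y). ((2 * u * (p - Q * v) + u\<^sup>2 * p') * x + (- Q * u\<^sup>2) * y,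
                      (S * (u - v) * v + S * (u + A) * v) * x
                        + (S * (u + A) * (u - v) - S * (u + A) * v) * y)))
         (at (u, v))"
proof -
  have F: "vfield A M Q S = (\<lambda>z. (fst z ^ 2 * ((fst z + A) * (1 - fst z) * (fst z - M) - Q * snd z),
      S * (fst z + A) * (fst z - snd z) * snd z))"
    by (simp add: vfield_def case_prod_beta')
  show ?thesis
    unfolding F p_def p'_def
    by (rule derivative_eq_intros refl | simp)+
       (auto simp: fun_eq_iff algebra_simps power2_eq_square)
qed

lemma vfield_cusp_point_diagonal:
  fixes A M Q S w :: real
  assumes "w \<noteq> 0" "Q \<noteq> 0"
    and equilibrium: "(w + A) * (1 - w) * (w - M) = Q * w"
    and slope: "(1 - w) * (w - M) - (w + A) * (w - M) + (w + A) * (1 - w) = Q"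
    and trace_zero: "S * (w + A) = Q * w"
  shows "cusp_point (vfield A M Q S) (w, w)"
proof -
  define a where "a = Q * w\<^sup>2"
  have "2 * w * ((w + A) * (1 - w) * (w - M) - Q * w)
        + w\<^sup>2 * ((1 - w) * (w - M) - (w + A) * (w - M) + (w + A) * (1 - w)) = a"
      "S * (w - w) * w + S * (w + A) * w = a"
      "S * (w + A) * (w - w) - S * (w + A) * w = - a"
    using equilibrium slope trace_zero by (simp_all add: a_def power2_eq_square)
  then have "(vfield A M Q S has_derivative
      (\<lambda>(x, y). (a * x + (- a) * y, a * x + (- a) * y))) (at (w, w))"
    using vfield_has_derivative[of A M Q S w w] by (simp only: a_def mult_minus_left)
  moreover have "(\<lambda>(x, y). (a * x + (- a) * y, a * x + (- a) * y)) \<noteq> (\<lambda>_. 0 :: real \<times> real)"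
    using assms(1,2) by (auto simp: a_def fun_eq_iff zero_prod_def)
  moreover have "vfield A M Q S (w, w) = 0"
    using equilibrium by (simp add: vfield_def zero_prod_def)
  ultimately show ?thesis
    unfolding cusp_point_def using nilpotent_map_trace_det_zero[of a "- a" "- a" a] by fastforce
qed

theorem theorem2:
  fixes A M Q S T L us \<Delta> um up :: real
    and g :: "real \<Rightarrow> real"
  assumes "0 < A" "A < 1" "M < 0" "Q > 0" "S > 0"
    and T_def: "T = 1 - A + M"
    and L_def: "L = A * (M + 1) - Q - M"
    and g_def: "g = (\<lambda>u. u ^ 3 - T * u\<^sup>2 - L * u + A * M)"
    and "0 < us" "us < 1" "g us = 0"
    and D_def: "\<Delta> = (us - T)\<^sup>2 - 4 * (us * (us - T) - L)"
    and "\<Delta> \<ge> 0"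
    and um_def: "um = (T - us - sqrt \<Delta>) / 2"
    and up_def: "up = (T - us + sqrt \<Delta>) / 2"
    and "us \<le> um" "um \<le> up"
    and "T > 0" "L < 0" "\<Delta> = 0"
    and S_eq: "S = Q * (T - us) / (1 + A + M - us)"
  shows "cusp_point (vfield A M Q S) (um, um)"
proof -
  define w where "w = um"
  have w: "w = (T - us) / 2"
    using um_def \<open>\<Delta> = 0\<close> w_def by simp
  have "w > 0" "w + A > 0"
    using \<open>us \<le> um\<close> \<open>0 < us\<close> \<open>0 < A\<close> w_def by simp_all
  have "w ^ 3 - T * w\<^sup>2 - L * w + A * M = 0" and g'_w: "3 * w\<^sup>2 - 2 * T * w - L = 0"
    using cubic_double_root_of_zero_discriminant[of us T L "A * M"] \<open>g us = 0\<close> D_def \<open>\<Delta> = 0\<close>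
    unfolding g_def w by auto
  have "1 + A + M - us = 2 * (w + A)" "T - us = 2 * w"
    using w T_def by simp_all
  then have "S * (w + A) = Q * w"
    using S_eq \<open>w + A > 0\<close> by (simp add: field_simps)
  moreover have "(w + A) * (1 - w) * (w - M) = Q * w"
    using \<open>w ^ 3 - T * w\<^sup>2 - L * w + A * M = 0\<close> unfolding T_def L_def
    by (simp add: power2_eq_square power3_eq_cube algebra_simps)
  moreover have "(1 - w) * (w - M) - (w + A) * (w - M) + (w + A) * (1 - w) = Q"
    using g'_w unfolding T_def L_def by (simp add: power2_eq_square algebra_simps)
  ultimately show ?thesis
    using vfield_cusp_point_diagonal \<open>w > 0\<close> \<open>Q > 0\<close> w_def by simp
qed

end
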